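(* Let $A$ be a Noetherian ring, $\mathcal{R}$ a standard graded ring with $\mathcal{R}_0=A$, and let $X\in\operatorname{^*Mod}_f(\mathcal{R})$ be quasi-finite. Then $\operatorname{Ass}_A X_n\subseteq\operatorname{Ass}_A X_{n+1}$ for all $n\gg0$.
   Context: A standard graded ring $\mathcal{R}=\bigoplus_{n\ge0}\mathcal{R}_n$ with $\mathcal{R}_0=A$ is a Noetherian $\mathbb{N}$-graded commutative ring generated as an $A$-algebra by finitely many elements of $\mathcal{R}_1$; $\mathcal{R}_+=\bigoplus_{n\ge1}\mathcal{R}_n$. $\operatorname{^*Mod}_f(\mathcal{R})$ is the full subcategory of graded $\mathcal{R}$-modules $X=\bigoplus_{n\in\mathbb{Z}}X_n$ with every $X_n$ a finitely generated $A$-module and $X_n=0$ for $n\ll0$. $H^0_{\mathcal{R}_+}(X)=\{x\in X:\mathcal{R}_+^k x=0\text{ for some }k\}$. A module $X\in\operatorname{^*Mod}_f(\mathcal{R})$ is quasi-finite if $H^0_{\mathcal{R}_+}(X)_n=0$ for all $n\gg0$. *)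

theory Defs
  imports Main "HOL.Modules"
begin

text \<open>The ambient graded ring is a type 'r (its whole universe), graded by
  Rg :: nat => 'r set. A graded module is a type 'm with scalar action sc
  (a HOL module over 'r), graded by Xg :: int => 'm set.\<close>

definition add_subgroup :: "'a::ab_group_add set \<Rightarrow> bool" where
  "add_subgroup S \<longleftrightarrow> 0 \<in> S \<and> (\<forall>x\<in>S. \<forall>y\<in>S. x + y \<in> S) \<and> (\<forall>x\<in>S. - x \<in> S)"

definition direct_sum_decomp :: "('i \<Rightarrow> 'a::ab_group_add set) \<Rightarrow> bool" where
  "direct_sum_decomp G \<longleftrightarrow>
     (\<forall>x. \<exists>!f. (\<forall>i. f i \<in> G i) \<and> finite {i. f i \<noteq> 0} \<and> x = sum f {i. f i \<noteq> 0})"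

definition graded_ring :: "(nat \<Rightarrow> 'r::comm_ring_1 set) \<Rightarrow> bool" where
  "graded_ring Rg \<longleftrightarrow> (\<forall>n. add_subgroup (Rg n))
     \<and> (\<forall>m n. \<forall>a\<in>Rg m. \<forall>b\<in>Rg n. a * b \<in> Rg (m + n))
     \<and> 1 \<in> Rg 0
     \<and> direct_sum_decomp Rg"

definition ideal_in :: "'r::comm_ring_1 set \<Rightarrow> 'r set \<Rightarrow> bool" where
  "ideal_in S I \<longleftrightarrow> I \<subseteq> S \<and> add_subgroup I \<and> (\<forall>s\<in>S. \<forall>x\<in>I. s * x \<in> I)"

definition subring :: "'r::comm_ring_1 set \<Rightarrow> bool" where
  "subring S \<longleftrightarrow> add_subgroup S \<and> 1 \<in> S \<and> (\<forall>x\<in>S. \<forall>y\<in>S. x * y \<in> S)"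

definition lin_span :: "('r \<Rightarrow> 'm::ab_group_add \<Rightarrow> 'm) \<Rightarrow> 'r set \<Rightarrow> 'm set \<Rightarrow> 'm set" where
  "lin_span sc S F = {\<Sum>x\<in>E. sc (c x) x | E c. finite E \<and> E \<subseteq> F \<and> (\<forall>x\<in>E. c x \<in> S)}"

definition noetherian_subring :: "'r::comm_ring_1 set \<Rightarrow> bool" where
  "noetherian_subring S \<longleftrightarrow> subring S \<and>
     (\<forall>I. ideal_in S I \<longrightarrow> (\<exists>F. finite F \<and> F \<subseteq> I \<and> I = lin_span (*) S F))"

definition prime_ideal_in :: "'r::comm_ring_1 set \<Rightarrow> 'r set \<Rightarrow> bool" where
  "prime_ideal_in S P \<longleftrightarrow> ideal_in S P \<and> P \<noteq> S \<and>
     (\<forall>a\<in>S. \<forall>b\<in>S. a * b \<in> P \<longrightarrow> a \<in> P \<or> b \<in> P)"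

definition subalg_gen :: "'r::comm_ring_1 set \<Rightarrow> 'r set \<Rightarrow> 'r set" where
  "subalg_gen A F = \<Inter>{S. subring S \<and> A \<subseteq> S \<and> F \<subseteq> S}"

definition standard_graded_ring :: "(nat \<Rightarrow> 'r::comm_ring_1 set) \<Rightarrow> bool" where
  "standard_graded_ring Rg \<longleftrightarrow> graded_ring Rg \<and> noetherian_subring (UNIV :: 'r set) \<and>
     (\<exists>F. finite F \<and> F \<subseteq> Rg 1 \<and> subalg_gen (Rg 0) F = UNIV)"

definition Rplus :: "(nat \<Rightarrow> 'r::comm_ring_1 set) \<Rightarrow> 'r set" where
  "Rplus Rg = {r. \<exists>f. (\<forall>n. f n \<in> Rg n) \<and> finite {n. f n \<noteq> 0} \<and> f 0 = 0
                     \<and> r = sum f {n. f n \<noteq> 0}}"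

definition ideal_pow :: "'r::comm_ring_1 set \<Rightarrow> nat \<Rightarrow> 'r set" where
  "ideal_pow I k = lin_span (*) UNIV {prod_list rs | rs. length rs = k \<and> set rs \<subseteq> I}"

definition graded_module_f ::
  "(nat \<Rightarrow> 'r::comm_ring_1 set) \<Rightarrow> ('r \<Rightarrow> 'm::ab_group_add \<Rightarrow> 'm) \<Rightarrow> (int \<Rightarrow> 'm set) \<Rightarrow> bool" where
  "graded_module_f Rg sc Xg \<longleftrightarrow> module sc
     \<and> (\<forall>n. add_subgroup (Xg n))
     \<and> (\<forall>m n. \<forall>a\<in>Rg m. \<forall>x\<in>Xg n. sc a x \<in> Xg (int m + n))
     \<and> direct_sum_decomp Xg
     \<and> (\<forall>n. \<exists>F. finite F \<and> F \<subseteq> Xg n \<and> Xg n = lin_span sc (Rg 0) F)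
     \<and> (\<exists>N. \<forall>n<N. Xg n = {0})"

definition H0_Rplus :: "(nat \<Rightarrow> 'r::comm_ring_1 set) \<Rightarrow> ('r \<Rightarrow> 'm::ab_group_add \<Rightarrow> 'm) \<Rightarrow> 'm set" where
  "H0_Rplus Rg sc = {x. \<exists>k. \<forall>r\<in>ideal_pow (Rplus Rg) k. sc r x = 0}"

definition quasi_finite ::
  "(nat \<Rightarrow> 'r::comm_ring_1 set) \<Rightarrow> ('r \<Rightarrow> 'm::ab_group_add \<Rightarrow> 'm) \<Rightarrow> (int \<Rightarrow> 'm set) \<Rightarrow> bool" where
  "quasi_finite Rg sc Xg \<longleftrightarrow> (\<exists>N. \<forall>n\<ge>N. H0_Rplus Rg sc \<inter> Xg n = {0})"

definition Ass_in :: "'r::comm_ring_1 set \<Rightarrow> ('r \<Rightarrow> 'm::ab_group_add \<Rightarrow> 'm) \<Rightarrow> 'm set \<Rightarrow> 'r set set" where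
  "Ass_in A sc M = {P. prime_ideal_in A P \<and> (\<exists>x\<in>M. P = {a\<in>A. sc a x = 0})}"

end

theory Submission imports Defs begin

text \<open>Let \<open>P = ann\<^sub>A x\<close> with \<open>x \<in> X\<^sub>n\<close>, and let \<open>F\<close> generate \<open>\<R>\<close> over \<open>A\<close> in degree one.
  Always \<open>P \<subseteq> ann\<^sub>A (f x)\<close>. If equality holds for some \<open>f \<in> F\<close>, then \<open>P \<in> Ass\<^sub>A X\<^sub>n\<^sub>+\<^sub>1\<close>.
  Otherwise choose \<open>b\<^sub>f \<notin> P\<close> with \<open>b\<^sub>f f x = 0\<close>; the product \<open>a\<close> of the \<open>b\<^sub>f\<close> lies outside the
  prime \<open>P\<close>, and \<open>a x \<in> X\<^sub>n\<close> is killed by every \<open>f \<in> F\<close>, hence by \<open>\<R>\<^sub>+\<close>. Quasi-finiteness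
  gives \<open>a x = 0\<close> for \<open>n \<gg> 0\<close>, i.e. \<open>a \<in> P\<close>, a contradiction.\<close>

definition component :: "('i \<Rightarrow> 'a::ab_group_add set) \<Rightarrow> 'a \<Rightarrow> 'i \<Rightarrow> 'a" where
  "component G x = (THE f. (\<forall>i. f i \<in> G i) \<and> finite {i. f i \<noteq> 0} \<and> x = sum f {i. f i \<noteq> 0})"

definition annihilator :: "'r set \<Rightarrow> ('r \<Rightarrow> 'm \<Rightarrow> 'm::zero) \<Rightarrow> 'm \<Rightarrow> 'r set" where
  "annihilator A sc x = {a \<in> A. sc a x = 0}"

lemma Ass_in_iff:
  "P \<in> Ass_in A sc M \<longleftrightarrow> prime_ideal_in A P \<and> (\<exists>x\<in>M. P = annihilator A sc x)"
  unfolding Ass_in_def annihilator_def by blast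

lemma component_unique:
  assumes D: "direct_sum_decomp G" and g: "\<forall>i. g i \<in> G i"
    and S: "finite S" "{i. g i \<noteq> 0} \<subseteq> S" and x: "x = sum g S"
  shows "component G x = g"
proof -
  have "sum g S = sum g {i. g i \<noteq> 0}"
    by (rule sum.mono_neutral_right[OF S]) auto
  moreover have "\<exists>!f. (\<forall>i. f i \<in> G i) \<and> finite {i. f i \<noteq> 0} \<and> x = sum f {i. f i \<noteq> 0}"
    using D unfolding direct_sum_decomp_def by blast
  ultimately show ?thesis
    unfolding component_def using g S x finite_subset by (intro the1_equality) auto
qed

lemma component_spec:
  assumes "direct_sum_decomp G"
  shows "(\<forall>i. component G x i \<in> G i) \<and> finite {i. component G x i \<noteq> 0}
    \<and> x = sum (component G x) {i. component G x i \<noteq> 0}"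
proof -
  have "\<exists>!f. (\<forall>i. f i \<in> G i) \<and> finite {i. f i \<noteq> 0} \<and> x = sum f {i. f i \<noteq> 0}"
    using assms unfolding direct_sum_decomp_def by blast
  then show ?thesis unfolding component_def by (rule theI')
qed

lemma component_homogeneous:
  assumes "direct_sum_decomp G" "\<forall>i. add_subgroup (G i)" "x \<in> G i"
  shows "component G x = (\<lambda>j. if j = i then x else 0)"
  using assms by (intro component_unique[of _ _ "{i}"]) (auto simp: add_subgroup_def)

lemma component_add:
  assumes D: "direct_sum_decomp G" and A: "\<forall>i. add_subgroup (G i)"
  shows "component G (x + y) = (\<lambda>i. component G x i + component G y i)"
proof -
  let ?S = "{i. component G x i \<noteq> 0} \<union> {i. component G y i \<noteq> 0}"
  note px = component_spec[OF D, of x] and py = component_spec[OF D, of y]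
  have "sum (component G x) ?S = sum (component G x) {i. component G x i \<noteq> 0}"
    "sum (component G y) ?S = sum (component G y) {i. component G y i \<noteq> 0}"
    by (rule sum.mono_neutral_right; use px py in auto)+
  then show ?thesis
    using px py A by (intro component_unique[OF D, of _ ?S])
      (auto simp: add_subgroup_def sum.distrib)
qed

lemma component_sum_eq_0:
  fixes G :: "'i \<Rightarrow> 'a::ab_group_add set" and u :: "'j \<Rightarrow> 'a"
  assumes D: "direct_sum_decomp G" and A: "\<forall>i. add_subgroup (G i)"
    and "finite E" "\<forall>j\<in>E. component G (u j) k = 0"
  shows "component G (sum u E) k = 0"
  using assms(3,4)
proof (induction E rule: finite_induct)
  case empty
  then show ?case using component_unique[OF D, of "\<lambda>_. 0" "{}"] A by (simp add: add_subgroup_def)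
next
  case (insert j E)
  then show ?case using component_add[OF D A] by simp
qed

lemma component_0_mult_positive_degree:
  assumes G: "graded_ring Rg" and f: "f \<in> Rg d" and d: "d \<ge> 1"
  shows "component Rg (c * f) 0 = 0"
proof -
  have D: "direct_sum_decomp Rg" and A: "\<forall>n. add_subgroup (Rg n)"
    and mul: "\<forall>m n. \<forall>a\<in>Rg m. \<forall>b\<in>Rg n. a * b \<in> Rg (m + n)"
    using G unfolding graded_ring_def by auto
  define T where "T = {j. component Rg c j \<noteq> 0}"
  define g where "g k = (if k < d then 0 else component Rg c (k - d) * f)" for k
  note pc = component_spec[OF D, of c]
  have "g k \<in> Rg k" for k
  proof (cases "k < d")
    case False
    then have "k = (k - d) + d" by simp
    then show ?thesis using False mul pc f unfolding g_def by metis
  qed (use A in \<open>simp add: g_def add_subgroup_def\<close>)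
  moreover have "{k. g k \<noteq> 0} \<subseteq> (\<lambda>j. j + d) ` T"
  proof
    fix k assume "k \<in> {k. g k \<noteq> 0}"
    then have "k = (k - d) + d" "k - d \<in> T" by (auto simp: g_def T_def split: if_splits)
    then show "k \<in> (\<lambda>j. j + d) ` T" by blast
  qed
  moreover have "c * f = sum g ((\<lambda>j. j + d) ` T)"
  proof -
    have "c * f = (\<Sum>j\<in>T. component Rg c j) * f" using pc T_def by simp
    then show ?thesis by (simp add: sum.reindex g_def sum_distrib_right)
  qed
  ultimately have "component Rg (c * f) = g"
    using pc T_def by (intro component_unique[OF D]) auto
  then show ?thesis using d by (simp add: g_def)
qed

lemma graded_ring_subring_0:
  assumes "graded_ring Rg"
  shows "subring (Rg 0)"
  using assms unfolding graded_ring_def subring_def by (metis add_0)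

definition ideal_gen :: "'r::comm_ring_1 set \<Rightarrow> 'r set" where
  "ideal_gen F = {\<Sum>f\<in>F. s f * f | s. True}"

lemma ideal_genI: "(\<Sum>f\<in>F. s f * f) \<in> ideal_gen F"
  unfolding ideal_gen_def by blast

lemma ideal_gen_zero: "0 \<in> ideal_gen F"
  using ideal_genI[of "\<lambda>_. 0"] by simp

lemma ideal_gen_add: "x \<in> ideal_gen F \<Longrightarrow> y \<in> ideal_gen F \<Longrightarrow> x + y \<in> ideal_gen F"
proof -
  assume "x \<in> ideal_gen F" "y \<in> ideal_gen F"
  then obtain s t where "x = (\<Sum>f\<in>F. s f * f)" "y = (\<Sum>f\<in>F. t f * f)"
    unfolding ideal_gen_def by blast
  then have "x + y = (\<Sum>f\<in>F. (s f + t f) * f)" by (simp add: sum.distrib distrib_right)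
  then show ?thesis using ideal_genI by metis
qed

lemma ideal_gen_mult: "x \<in> ideal_gen F \<Longrightarrow> c * x \<in> ideal_gen F"
proof -
  assume "x \<in> ideal_gen F"
  then obtain s where "x = (\<Sum>f\<in>F. s f * f)" unfolding ideal_gen_def by blast
  then have "c * x = (\<Sum>f\<in>F. (c * s f) * f)" by (simp add: sum_distrib_left mult.assoc)
  then show ?thesis using ideal_genI by metis
qed

lemma subset_ideal_gen:
  assumes "finite F"
  shows "F \<subseteq> ideal_gen F"
proof
  fix f assume "f \<in> F"
  then have "(\<Sum>g\<in>F. (if g = f then 1 else 0) * g) = f"
    using assms by (simp add: if_distrib[of "\<lambda>c. c * _"] cong: if_cong)
  then show "f \<in> ideal_gen F" using ideal_genI by metis
qed

lemma subring_plus_ideal_gen: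
  fixes A :: "'r::comm_ring_1 set"
  assumes A: "subring A"
  shows "subring {a + i | a i. a \<in> A \<and> i \<in> ideal_gen F}"
proof -
  define S where "S = {a + i | a i. a \<in> A \<and> i \<in> ideal_gen F}"
  have Sin: "a + i \<in> S" if "a \<in> A" "i \<in> ideal_gen F" for a i
    using that unfolding S_def by blast
  have A': "0 \<in> A" "1 \<in> A" "\<And>x y. x \<in> A \<Longrightarrow> y \<in> A \<Longrightarrow> x + y \<in> A"
    "\<And>x y. x \<in> A \<Longrightarrow> y \<in> A \<Longrightarrow> x * y \<in> A" "\<And>x. x \<in> A \<Longrightarrow> - x \<in> A"
    using A unfolding subring_def add_subgroup_def by auto
  have "subring S" unfolding subring_def add_subgroup_def
  proof (intro conjI ballI)
    show "0 \<in> S" "1 \<in> S"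
      using Sin[OF A'(1) ideal_gen_zero] Sin[OF A'(2) ideal_gen_zero] by simp_all
  next
    fix x y assume "x \<in> S" "y \<in> S"
    then obtain a i b j where xy: "x = a + i" "y = b + j" "a \<in> A" "b \<in> A"
      "i \<in> ideal_gen F" "j \<in> ideal_gen F"
      unfolding S_def by blast
    have "x + y = (a + b) + (i + j)" "x * y = a * b + ((a * j + b * i) + i * j)"
      using xy by (simp_all add: algebra_simps)
    moreover have "a + b \<in> A" "a * b \<in> A" "i + j \<in> ideal_gen F"
      "(a * j + b * i) + i * j \<in> ideal_gen F"
      using xy A' by (simp_all add: ideal_gen_add ideal_gen_mult)
    ultimately show "x + y \<in> S" "x * y \<in> S" using Sin by simp_all
  next
    fix x assume "x \<in> S"
    then obtain a i where "x = a + i" "a \<in> A" "i \<in> ideal_gen F" unfolding S_def by blast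
    moreover have "(- 1) * i \<in> ideal_gen F" using ideal_gen_mult \<open>i \<in> ideal_gen F\<close> by blast
    ultimately show "- x \<in> S" using Sin[of "- a" "(- 1) * i"] A' by simp
  qed
  then show ?thesis unfolding S_def .
qed

lemma subalg_gen_subset_plus_ideal_gen:
  fixes A :: "'r::comm_ring_1 set"
  assumes A: "subring A" and F: "finite F"
  shows "subalg_gen A F \<subseteq> {a + i | a i. a \<in> A \<and> i \<in> ideal_gen F}" (is "_ \<subseteq> ?S")
proof -
  have "a + 0 \<in> ?S" if "a \<in> A" for a
    using that ideal_gen_zero by blast
  moreover have "0 + f \<in> ?S" if "f \<in> F" for f
    using that subset_ideal_gen[OF F] A unfolding subring_def add_subgroup_def by blast
  ultimately have "A \<subseteq> ?S" "F \<subseteq> ?S" by auto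
  then show ?thesis
    unfolding subalg_gen_def using subring_plus_ideal_gen[OF A] by blast
qed

text \<open>Comparing degree-zero components of \<open>h = a + \<Sum>\<^sub>f s\<^sub>f f\<close> kills the constant term \<open>a\<close>.\<close>

lemma positive_degree_combination:
  assumes G: "graded_ring Rg" and F: "finite F" "F \<subseteq> Rg 1"
    and gen: "subalg_gen (Rg 0) F = UNIV" and h: "h \<in> Rg m" "m \<ge> 1"
  shows "\<exists>s. h = (\<Sum>f\<in>F. s f * f)"
proof -
  have D: "direct_sum_decomp Rg" and A: "\<forall>n. add_subgroup (Rg n)"
    using G unfolding graded_ring_def by auto
  obtain a s where has: "h = a + (\<Sum>f\<in>F. s f * f)" "a \<in> Rg 0"
    using subalg_gen_subset_plus_ideal_gen[OF graded_ring_subring_0[OF G] F(1)] gen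
    unfolding ideal_gen_def by blast
  have "component Rg (\<Sum>f\<in>F. s f * f) 0 = 0"
    using F by (intro component_sum_eq_0[OF D A]) (auto intro: component_0_mult_positive_degree[OF G])
  then have "component Rg h 0 = a"
    using has component_add[OF D A] component_homogeneous[OF D A] by simp
  moreover have "component Rg h 0 = 0"
    using component_homogeneous[OF D A h(1)] h(2) by simp
  ultimately show ?thesis using has by auto
qed

lemma H0_RplusI:
  assumes M: "module sc" and y: "\<forall>r\<in>Rplus Rg. sc r y = 0"
  shows "y \<in> H0_Rplus Rg sc"
  unfolding H0_Rplus_def
proof (intro CollectI exI[of _ 1] ballI)
  fix r assume "r \<in> ideal_pow (Rplus Rg) 1"
  then obtain E c where E: "finite E" "E \<subseteq> Rplus Rg" and r: "r = (\<Sum>z\<in>E. c z * z)"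
    unfolding ideal_pow_def lin_span_def by (fastforce simp: length_Suc_conv)
  have "sc r y = (\<Sum>z\<in>E. sc (c z) (sc z y))"
    unfolding r module.scale_sum_left[OF M] by (simp add: module.scale_scale[OF M])
  also have "\<dots> = 0"
    using E y module.scale_zero_right[OF M] by (simp add: subset_iff)
  finally show "sc r y = 0" .
qed

lemma Rplus_annihilates:
  assumes M: "module sc" and y: "\<And>m h. m \<ge> 1 \<Longrightarrow> h \<in> Rg m \<Longrightarrow> sc h y = 0"
    and r: "r \<in> Rplus Rg"
  shows "sc r y = 0"
proof -
  obtain g where g: "\<forall>n. g n \<in> Rg n" "g 0 = 0" "r = sum g {n. g n \<noteq> 0}"
    using r unfolding Rplus_def by blast
  have "sc (g k) y = 0" if "g k \<noteq> 0" for k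
    using that g y[of k] by (cases k) auto
  then show ?thesis
    unfolding g(3) module.scale_sum_left[OF M] by simp
qed

lemma H0_Rplus_if_generators_annihilate:
  assumes G: "graded_ring Rg" and F: "finite F" "F \<subseteq> Rg 1"
    and gen: "subalg_gen (Rg 0) F = UNIV"
    and M: "module sc" and y: "\<forall>f\<in>F. sc f y = 0"
  shows "y \<in> H0_Rplus Rg sc"
proof -
  have "sc h y = 0" if h: "h \<in> Rg m" "m \<ge> 1" for m h
  proof -
    obtain s where "h = (\<Sum>f\<in>F. s f * f)"
      using positive_degree_combination[OF G F gen h] by blast
    then have "sc h y = (\<Sum>f\<in>F. sc (s f) (sc f y))"
      by (simp add: module.scale_sum_left[OF M] module.scale_scale[OF M])
    then show ?thesis
      using y module.scale_zero_right[OF M] by simp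
  qed
  then show ?thesis
    using Rplus_annihilates[OF M] by (intro H0_RplusI[OF M]) blast
qed

lemma prod_notin_prime_ideal:
  assumes P: "prime_ideal_in A P" and A: "subring A"
    and "finite E" "\<forall>e\<in>E. b e \<in> A - P"
  shows "prod b E \<in> A - P"
  using assms(3,4)
proof (induction E rule: finite_induct)
  case empty
  have "1 \<notin> P"
  proof
    assume "1 \<in> P"
    then have "A \<subseteq> P" using P unfolding prime_ideal_in_def ideal_in_def by force
    then show False using P unfolding prime_ideal_in_def ideal_in_def by blast
  qed
  then show ?case using A by (simp add: subring_def)
next
  case (insert e E)
  then show ?case
    using P A unfolding prime_ideal_in_def subring_def by auto
qed

lemma annihilator_scale_subset:
  assumes "module sc"
  shows "annihilator A sc x \<subseteq> annihilator A sc (sc f x)"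
  unfolding annihilator_def
  using module.scale_left_commute[OF assms, of _ f x] module.scale_zero_right[OF assms] by auto

lemma annihilator_eq_or_common_kernel:
  assumes M: "module sc" and A: "subring A" and P: "prime_ideal_in A (annihilator A sc x)"
    and F: "finite F"
  obtains f where "f \<in> F" "annihilator A sc (sc f x) = annihilator A sc x"
  | a where "a \<in> A - annihilator A sc x" "\<forall>f\<in>F. sc f (sc a x) = 0"
proof (cases "\<exists>f\<in>F. annihilator A sc (sc f x) = annihilator A sc x")
  case False
  then have "\<forall>f\<in>F. \<exists>b. b \<in> A - annihilator A sc x \<and> sc b (sc f x) = 0"
    using annihilator_scale_subset[OF M] unfolding annihilator_def by blast
  then obtain b where b: "\<forall>f\<in>F. b f \<in> A - annihilator A sc x \<and> sc (b f) (sc f x) = 0"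
    by metis
  have "sc f (sc (prod b F) x) = 0" if f: "f \<in> F" for f
  proof -
    have "prod b F = prod b (F - {f}) * b f"
      using prod.remove[OF F f] by (simp add: mult.commute)
    then have "sc (prod b F) (sc f x) = sc (prod b (F - {f})) (sc (b f) (sc f x))"
      by (simp add: module.scale_scale[OF M] mult.assoc)
    then have "sc (prod b F) (sc f x) = 0"
      using b f module.scale_zero_right[OF M] by simp
    then show ?thesis using module.scale_left_commute[OF M] by metis
  qed
  moreover have "prod b F \<in> A - annihilator A sc x"
    using b by (intro prod_notin_prime_ideal[OF P A F]) blast
  ultimately show ?thesis using that(2) by blast
qed (use that in blast)

lemma Ass_in_subset_Ass_in_succ:
  assumes G: "graded_ring Rg" and F: "finite F" "F \<subseteq> Rg 1"
    and gen: "subalg_gen (Rg 0) F = UNIV" and M: "module sc"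
    and X: "\<forall>m n. \<forall>a\<in>Rg m. \<forall>x\<in>Xg n. sc a x \<in> Xg (int m + n)"
    and H0: "H0_Rplus Rg sc \<inter> Xg n = {0}"
  shows "Ass_in (Rg 0) sc (Xg n) \<subseteq> Ass_in (Rg 0) sc (Xg (n + 1))"
proof
  fix P assume "P \<in> Ass_in (Rg 0) sc (Xg n)"
  then obtain x where x: "x \<in> Xg n" and P: "prime_ideal_in (Rg 0) P" "P = annihilator (Rg 0) sc x"
    by (auto simp: Ass_in_iff)
  show "P \<in> Ass_in (Rg 0) sc (Xg (n + 1))"
  proof (rule annihilator_eq_or_common_kernel[OF M graded_ring_subring_0[OF G] P(1)[unfolded P(2)] F(1)])
    fix f assume "f \<in> F" "annihilator (Rg 0) sc (sc f x) = annihilator (Rg 0) sc x"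
    moreover have "sc f x \<in> Xg (n + 1)" using X \<open>f \<in> F\<close> F(2) x by (force simp: add.commute)
    ultimately show ?thesis using P by (auto simp: Ass_in_iff)
  next
    fix a assume a: "a \<in> Rg 0 - annihilator (Rg 0) sc x" "\<forall>f\<in>F. sc f (sc a x) = 0"
    have "sc a x \<in> H0_Rplus Rg sc \<inter> Xg n"
      using H0_Rplus_if_generators_annihilate[OF G F gen M a(2)] X a(1) x by force
    then show ?thesis using H0 a(1) by (auto simp: annihilator_def)
  qed
qed

theorem proposition4p2:
  fixes Rg :: "nat \<Rightarrow> 'r::comm_ring_1 set"
    and sc :: "'r \<Rightarrow> 'm::ab_group_add \<Rightarrow> 'm"
    and Xg :: "int \<Rightarrow> 'm set"
  assumes "noetherian_subring (Rg 0)"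
    and "standard_graded_ring Rg"
    and "graded_module_f Rg sc Xg"
    and "quasi_finite Rg sc Xg"
  shows "\<exists>N. \<forall>n\<ge>N. Ass_in (Rg 0) sc (Xg n) \<subseteq> Ass_in (Rg 0) sc (Xg (n + 1))"
proof -
  obtain F where G: "graded_ring Rg" and F: "finite F" "F \<subseteq> Rg 1"
    and gen: "subalg_gen (Rg 0) F = UNIV"
    using assms(2) unfolding standard_graded_ring_def by blast
  have M: "module sc" and X: "\<forall>m n. \<forall>a\<in>Rg m. \<forall>x\<in>Xg n. sc a x \<in> Xg (int m + n)"
    using assms(3) unfolding graded_module_f_def by blast+
  obtain N where "\<forall>n\<ge>N. H0_Rplus Rg sc \<inter> Xg n = {0}"
    using assms(4) unfolding quasi_finite_def by blast
  then show ?thesis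
    using Ass_in_subset_Ass_in_succ[OF G F gen M X] by blast
qed

end
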